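(* Let $m,N\in\mathbb{N}$ with $N$ square-free and $\gcd(m,N)=1$. Then there exists an integer $1\leq n\leq 2N$ with $n\neq m$ and $\gcd(n,N)=1$ such that $$\left|K(m,n,N)\right|\geq \frac{\sqrt{N}}{2^{\frac12\omega(N)+1}}.$$
   Context: For integers $a,b$ and $c\ge1$, the Kloosterman sum is $K(a,b,c)=\sum_{1\le x\le c,\ \gcd(x,c)=1} e\!\left(\frac{ax+b\overline{x}}{c}\right)$, where $\overline{x}$ is the inverse of $x$ modulo $c$ and $e(z)=e^{2\pi i z}$. $\omega(N)$ denotes the number of distinct prime factors of $N$. *)

theory Defs
  imports "HOL-Analysis.Analysis" "HOL-Number_Theory.Number_Theory" "HOL-Computational_Algebra.Squarefree"
begin

definition ee :: "real \<Rightarrow> complex" where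
  "ee z = exp (2 * of_real pi * \<i> * of_real z)"

definition modinv :: "int \<Rightarrow> int \<Rightarrow> int" where
  "modinv x c = (SOME y. 0 \<le> y \<and> y < c \<and> [x * y = 1] (mod c))"

definition kloosterman :: "int \<Rightarrow> int \<Rightarrow> int \<Rightarrow> complex" where
  "kloosterman a b c =
     (\<Sum>x\<in>{x. 1 \<le> x \<and> x \<le> c \<and> coprime x c}.
        ee (real_of_int (a * x + b * modinv x c) / real_of_int c))"

definition omega :: "nat \<Rightarrow> nat" where
  "omega n = card (prime_factors n)"

end

theory Submission
  imports Defs
begin

text \<open>Since \<open>x \<mapsto> x\<inverse>\<close> permutes the units modulo \<open>N\<close>, the map \<open>n \<mapsto> K(m, n, N)\<close> is a discrete
  Fourier transform, and Parseval gives \<open>\<Sum>\<^sub>n |K(m, n, N)|\<^sup>2 = N \<phi>(N)\<close> over \<open>n mod N\<close>.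
  The \<open>n\<close> sharing a prime \<open>p\<close> with \<open>N = p M\<close> contribute little: grouping \<open>x\<close> by \<open>x mod M\<close>
  makes \<open>j \<mapsto> K(m, p j, N)\<close> a Fourier transform over the units modulo \<open>M\<close>, whose coefficients
  are the sums of \<open>e(m x / N)\<close> over the units \<open>x \<equiv> r (mod M)\<close>. As \<open>N\<close> is squarefree, \<open>p\<close> is
  prime to \<open>M\<close>, and such a fibre is a full progression of \<open>p\<close> terms (summing to \<open>0\<close> because
  \<open>p\<close> does not divide \<open>m\<close>) minus at most one term; hence
  \<open>\<Sum>\<^sub>j |K(m, p j, N)|\<^sup>2 \<le> N \<phi>(N) / (p (p - 1))\<close>. Since \<open>\<Sum>\<^sub>p 1 / (p (p - 1)) \<le> 1 - 1 / (\<omega>(N) + 1)\<close>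
  over the primes dividing \<open>N\<close>, the \<open>\<phi>(N)\<close> values of \<open>n\<close> prime to \<open>N\<close> carry at least
  \<open>N \<phi>(N) / (\<omega>(N) + 1)\<close>, so one of them has \<open>|K|\<^sup>2 \<ge> N / (\<omega>(N) + 1) \<ge> N / 2\<^bsup>\<omega>(N) + 2\<^esup>\<close>.
  If that \<open>n\<close> is \<open>m\<close>, then \<open>n + N\<close> gives the same sum.\<close>

lemma ee_add: "ee (a + b) = ee a * ee b"
  unfolding ee_def by (simp add: distrib_left distrib_right exp_add)

lemma ee_of_int [simp]: "ee (of_int k) = 1"
proof -
  have "2 * complex_of_real pi * \<i> * complex_of_real (of_int k) = \<i> * (complex_of_int k * (complex_of_real pi * 2))"
    by simp
  then show ?thesis unfolding ee_def using exp_2pi_1_int by metis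
qed

lemma ee_add_of_int: "ee (a + of_int k) = ee a"
  by (simp add: ee_add)

lemma norm_ee [simp]: "cmod (ee z) = 1"
proof -
  have "2 * complex_of_real pi * \<i> * complex_of_real z = \<i> * complex_of_real (2 * pi * z)"
    by simp
  then show ?thesis unfolding ee_def by (metis norm_exp_i_times)
qed

lemma cnj_ee: "cnj (ee z) = ee (- z)"
  unfolding ee_def by (simp add: exp_cnj)

lemma ee_power: "ee z ^ k = ee (real k * z)"
proof -
  have "ee (real k * z) = exp (of_nat k * (2 * complex_of_real pi * \<i> * complex_of_real z))"
    unfolding ee_def by (simp add: mult_ac)
  then show ?thesis unfolding ee_def by (simp add: exp_of_nat_mult)
qed

lemma ee_eq_1_iff: "ee z = 1 \<longleftrightarrow> z \<in> \<int>"
proof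
  assume "ee z = 1"
  then obtain n where "Im (2 * complex_of_real pi * \<i> * complex_of_real z) = real_of_int (2 * n) * pi"
    unfolding ee_def exp_eq_1 by blast
  then have "z = of_int n" using pi_gt_zero by (simp add: field_simps)
  then show "z \<in> \<int>" by simp
qed (auto elim: Ints_cases)

lemma ee_cong:
  fixes M :: nat
  assumes "[a = b] (mod int M)" "M > 0"
  shows "ee (real k * of_int a / real M) = ee (real k * of_int b / real M)"
proof -
  obtain q where q: "a = b + int M * q"
    using assms(1) by (metis cong_iff_lin cong_sym_eq)
  have "real k * of_int a / real M = real k * of_int b / real M + of_int (int k * q)"
    using assms(2) q by (simp add: field_simps)
  then show ?thesis by (metis ee_add_of_int)
qed

lemma sum_ee_roots_of_unity:
  fixes M :: nat and d :: int
  assumes "M > 0"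
  shows "(\<Sum>k<M. ee (real k * of_int d / real M)) = (if int M dvd d then of_nat M else 0)"
proof (cases "int M dvd d")
  case True
  then obtain q where "d = int M * q" by blast
  then have "ee (real k * of_int d / real M) = 1" for k
    using assms ee_of_int[of "int k * q"] by simp
  then show ?thesis using True by simp
next
  case False
  define w where "w = ee (of_int d / real M)"
  have "w \<noteq> 1"
  proof
    assume "w = 1"
    then obtain q where "of_int d / real M = of_int q"
      unfolding w_def ee_eq_1_iff by (metis Ints_cases)
    then have "of_int d = real_of_int (int M * q)" using assms by (simp add: field_simps)
    then have "d = int M * q" by linarith
    then show False using False by simp
  qed
  moreover have "w ^ M = 1"
    unfolding w_def ee_power using assms by simp
  moreover have "(\<Sum>k<M. ee (real k * of_int d / real M)) = (\<Sum>k<M. w ^ k)"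
    unfolding w_def ee_power by simp
  ultimately show ?thesis using False by (simp add: geometric_sum)
qed

lemma discrete_parseval:
  fixes M :: nat and I :: "'a set" and a :: "'a \<Rightarrow> complex" and u :: "'a \<Rightarrow> int"
  assumes M: "M > 0" and fin: "finite I"
    and inj: "\<And>i j. i \<in> I \<Longrightarrow> j \<in> I \<Longrightarrow> [u i = u j] (mod int M) \<Longrightarrow> i = j"
  shows "(\<Sum>k<M. (cmod (\<Sum>i\<in>I. a i * ee (real k * of_int (u i) / real M)))^2)
         = real M * (\<Sum>i\<in>I. (cmod (a i))^2)"
proof -
  define e where "e k d = ee (real k * of_int d / real M)" for k d
  have e_mult_cnj: "e k (u i) * cnj (e k (u j)) = e k (u i - u j)" for k i j
    by (simp add: e_def cnj_ee ee_add[symmetric] diff_divide_distrib right_diff_distrib)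
  have "complex_of_real (\<Sum>k<M. (cmod (\<Sum>i\<in>I. a i * e k (u i)))^2)
     = (\<Sum>k<M. (\<Sum>i\<in>I. a i * e k (u i)) * cnj (\<Sum>j\<in>I. a j * e k (u j)))"
    by (simp only: of_real_sum complex_norm_square)
  also have "\<dots> = (\<Sum>k<M. \<Sum>i\<in>I. \<Sum>j\<in>I. a i * cnj (a j) * e k (u i - u j))"
    by (simp only: cnj_sum sum_product complex_cnj_mult e_mult_cnj[symmetric] mult_ac)
  also have "\<dots> = (\<Sum>i\<in>I. \<Sum>j\<in>I. a i * cnj (a j) * (\<Sum>k<M. e k (u i - u j)))"
    by (simp add: sum_distrib_left sum.swap[of _ "{..<M}"] sum.swap[of _ "{..<M}" I])
  also have "\<dots> = (\<Sum>i\<in>I. \<Sum>j\<in>I. if j = i then a i * cnj (a i) * of_nat M else 0)"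
  proof (intro sum.cong refl)
    fix i j assume "i \<in> I" "j \<in> I"
    then have "int M dvd (u i - u j) \<longleftrightarrow> j = i"
      using inj by (auto simp: cong_iff_dvd_diff)
    then show "a i * cnj (a j) * (\<Sum>k<M. e k (u i - u j)) = (if j = i then a i * cnj (a i) * of_nat M else 0)"
      unfolding e_def sum_ee_roots_of_unity[OF M] by simp
  qed
  also have "\<dots> = (\<Sum>i\<in>I. a i * cnj (a i) * of_nat M)"
    using fin by (simp add: sum.delta)
  also have "\<dots> = complex_of_real (real M * (\<Sum>i\<in>I. (cmod (a i))^2))"
    by (simp only: of_real_sum of_real_mult complex_norm_square sum_distrib_left of_real_of_nat_eq mult_ac)
  finally show ?thesis unfolding e_def by (simp only: of_real_eq_iff)
qed

definition reduced_residues :: "int \<Rightarrow> int set" where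
  "reduced_residues c = {x. 0 \<le> x \<and> x < c \<and> coprime x c}"

lemma finite_reduced_residues [simp]: "finite (reduced_residues c)"
  unfolding reduced_residues_def by (rule finite_subset[of _ "{0..<c}"]) auto

lemma mult_modinv_cong_1:
  assumes "coprime x c" "c > 0" "d dvd c"
  shows "[x * modinv x c = 1] (mod d)"
proof -
  have "\<exists>y. 0 \<le> y \<and> y < c \<and> [x * y = 1] (mod c)"
    using coprime_iff_invertible'_int[of c x] assms by auto
  then have "[x * modinv x c = 1] (mod c)"
    unfolding modinv_def by (rule someI2_ex) blast
  then show ?thesis using assms(3) by (rule cong_dvd_modulus)
qed

lemma cong_inverses_iff:
  fixes x y x' y' d :: int
  assumes "[x * x' = 1] (mod d)" "[y * y' = 1] (mod d)"
  shows "[x' = y'] (mod d) \<longleftrightarrow> [x = y] (mod d)"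
proof -
  have cong: "[a = b] (mod d)"
    if "[a * a' = 1] (mod d)" "[b * b' = 1] (mod d)" "[a' = b'] (mod d)" for a a' b b' :: int
  proof -
    have "[a = a * (b * b')] (mod d)" using cong_scalar_left[OF that(2), of a] by (simp add: cong_sym)
    also have "[a * (b * b') = b * (a * a')] (mod d)"
      using cong_scalar_left[OF that(3), of "a * b"] by (simp add: cong_sym mult_ac)
    also have "[b * (a * a') = b] (mod d)" using cong_scalar_left[OF that(1), of b] by simp
    finally show ?thesis .
  qed
  show ?thesis
    using cong[OF assms] cong[of x' x y' y] assms by (auto simp: mult.commute)
qed

lemma modinv_cong_imp_eq:
  assumes "i \<in> reduced_residues c" "j \<in> reduced_residues c" "[modinv i c = modinv j c] (mod c)"
  shows "i = j"
proof -
  have "[i * modinv i c = 1] (mod c)" "[j * modinv j c = 1] (mod c)"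
    using assms(1,2) by (auto simp: reduced_residues_def intro: mult_modinv_cong_1)
  then have "[i = j] (mod c)" using assms(3) cong_inverses_iff by blast
  then show ?thesis using assms(1,2) unfolding reduced_residues_def by (auto intro: cong_less_imp_eq_int)
qed

lemma kloosterman_eq_sum_reduced_residues:
  assumes "c \<ge> 2"
  shows "kloosterman a b c = (\<Sum>x\<in>reduced_residues c. ee (of_int a * of_int x / of_int c) * ee (of_int b * of_int (modinv x c) / of_int c))"
proof -
  have "\<not> coprime c c" "\<not> coprime 0 c" using assms by auto
  then have "{x. 1 \<le> x \<and> x \<le> c \<and> coprime x c} = reduced_residues c"
    unfolding reduced_residues_def by (force simp: order_le_less)
  then show ?thesis unfolding kloosterman_def
    by (simp add: ee_add[symmetric] add_divide_distrib)
qed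

lemma kloosterman_add_modulus:
  assumes "c > 0"
  shows "kloosterman a (b + c) c = kloosterman a b c"
  unfolding kloosterman_def
proof (rule sum.cong[OF refl])
  fix x
  have "real_of_int (a * x + (b + c) * modinv x c) / real_of_int c
      = real_of_int (a * x + b * modinv x c) / real_of_int c + real_of_int (modinv x c)"
    using assms by (simp add: field_simps)
  then show "ee (real_of_int (a * x + (b + c) * modinv x c) / real_of_int c) = ee (real_of_int (a * x + b * modinv x c) / real_of_int c)"
    by (simp add: ee_add_of_int)
qed

lemma kloosterman_modulus_1: "kloosterman a b 1 = 1"
proof -
  have "{x::int. 1 \<le> x \<and> x \<le> 1 \<and> coprime x 1} = {1}" by auto
  then show ?thesis unfolding kloosterman_def
    using ee_of_int[of "a + b * modinv 1 1"] by simp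
qed

lemma sum_norm_kloosterman_sq:
  fixes N :: nat and m :: int
  assumes N: "N \<ge> 2"
  shows "(\<Sum>k<N. (cmod (kloosterman m (int k) (int N)))^2) = real N * card (reduced_residues (int N))"
proof -
  have "(\<Sum>k<N. (cmod (kloosterman m (int k) (int N)))^2)
     = (\<Sum>k<N. (cmod (\<Sum>x\<in>reduced_residues (int N). ee (of_int m * of_int x / of_int (int N)) * ee (real k * of_int (modinv x (int N)) / real N)))^2)"
    using N by (simp add: kloosterman_eq_sum_reduced_residues)
  also have "\<dots> = real N * (\<Sum>x\<in>reduced_residues (int N). (cmod (ee (of_int m * of_int x / of_int (int N))))^2)"
  proof (rule discrete_parseval)
    fix i j assume "i \<in> reduced_residues (int N)" "j \<in> reduced_residues (int N)"
      "[modinv i (int N) = modinv j (int N)] (mod int N)"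
    then show "i = j" by (rule modinv_cong_imp_eq)
  qed (use N in auto)
  also have "\<dots> = real N * card (reduced_residues (int N))" by simp
  finally show ?thesis .
qed

lemma progression_eq_image:
  fixes p M :: nat and r :: int
  assumes M: "M > 0" and r: "0 \<le> r" "r < int M"
  shows "{x. 0 \<le> x \<and> x < int (p * M) \<and> x mod int M = r} = (\<lambda>t. r + int M * int t) ` {..<p}"
proof (intro equalityI subsetI)
  fix x assume x: "x \<in> {x. 0 \<le> x \<and> x < int (p * M) \<and> x mod int M = r}"
  then have x_eq: "x = r + int M * (x div int M)"
    using div_mult_mod_eq[of x "int M"] by (simp add: mult.commute)
  moreover have "0 \<le> x div int M" using x M by (simp add: pos_imp_zdiv_nonneg_iff)
  moreover have "x div int M < int p"
  proof -
    have "int M * (x div int M) \<le> x" using x_eq r by linarith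
    then have "int M * (x div int M) < int M * int p" using x by (simp add: mult.commute)
    then show ?thesis using M by (metis mult_less_cancel_left_pos of_nat_0_less_iff)
  qed
  ultimately show "x \<in> (\<lambda>t. r + int M * int t) ` {..<p}"
    by (intro image_eqI[of _ _ "nat (x div int M)"]) auto
next
  fix x assume "x \<in> (\<lambda>t. r + int M * int t) ` {..<p}"
  then obtain t where t: "t < p" "x = r + int M * int t" by auto
  have "int M * (int t + 1) \<le> int M * int p"
    using t(1) by (intro mult_left_mono) auto
  then show "x \<in> {x. 0 \<le> x \<and> x < int (p * M) \<and> x mod int M = r}"
    using t r M by (auto simp: algebra_simps)
qed

lemma card_progression:
  fixes p M :: nat and r :: int
  assumes "M > 0" "0 \<le> r" "r < int M"
  shows "card {x. 0 \<le> x \<and> x < int (p * M) \<and> x mod int M = r} = p"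
proof -
  have "inj_on (\<lambda>t. r + int M * int t) {..<p}"
    using assms by (auto simp: inj_on_def)
  then show ?thesis unfolding progression_eq_image[OF assms] by (simp add: card_image)
qed

lemma sum_ee_progression:
  fixes p M :: nat and m r :: int
  assumes p: "p > 0" and M: "M > 0" and pm: "\<not> int p dvd m" and r: "0 \<le> r" "r < int M"
  shows "(\<Sum>x | 0 \<le> x \<and> x < int (p * M) \<and> x mod int M = r. ee (of_int m * of_int x / real (p * M))) = 0"
proof -
  have inj: "inj_on (\<lambda>t. r + int M * int t) {..<p}"
    using M by (auto simp: inj_on_def)
  have split: "of_int m * of_int (r + int M * int t) / real (p * M)
      = of_int m * of_int r / real (p * M) + real t * of_int m / real p" for t
    using M p by (simp add: field_simps)
  have "(\<Sum>x | 0 \<le> x \<and> x < int (p * M) \<and> x mod int M = r. ee (of_int m * of_int x / real (p * M)))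
      = (\<Sum>t<p. ee (of_int m * of_int r / real (p * M)) * ee (real t * of_int m / real p))"
    unfolding progression_eq_image[OF M r] sum.reindex[OF inj] comp_def
    by (intro sum.cong refl) (simp only: split ee_add)
  also have "\<dots> = 0"
    using sum_ee_roots_of_unity[OF p, of m] pm by (simp flip: sum_distrib_left)
  finally show ?thesis .
qed

text \<open>\<open>B\<close> is the set of lifts divisible by \<open>p\<close>; by the Chinese remainder theorem there is at most
  one, and the other lifts of the unit \<open>r\<close> are exactly the units modulo \<open>p M\<close>.\<close>
lemma reduced_residues_fibre:
  fixes p M :: nat and r :: int
  assumes p: "prime p" and M: "M > 0" and cop: "coprime p M" and r: "r \<in> reduced_residues (int M)"
  obtains B where "B \<subseteq> {x. 0 \<le> x \<and> x < int (p * M) \<and> x mod int M = r}" "card B \<le> 1"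
    "{x \<in> reduced_residues (int (p * M)). x mod int M = r}
       = {x. 0 \<le> x \<and> x < int (p * M) \<and> x mod int M = r} - B"
proof
  define P where "P = {x. 0 \<le> x \<and> x < int (p * M) \<and> x mod int M = r}"
  define B where "B = {x \<in> P. int p dvd x}"
  show "B \<subseteq> {x. 0 \<le> x \<and> x < int (p * M) \<and> x mod int M = r}"
    unfolding B_def P_def by auto
  have "a = b" if "a \<in> B" "b \<in> B" for a b
  proof -
    have "[a = b] (mod int M)" "[a = b] (mod int p)"
      using that unfolding B_def P_def by (auto simp: cong_def dvd_imp_mod_0)
    then have "[a = b] (mod int p * int M)"
      using cop by (simp add: coprime_cong_mult)
    then show ?thesis using that unfolding B_def P_def by (auto intro: cong_less_imp_eq_int)
  qed
  moreover have "finite B"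
    unfolding B_def P_def by (rule finite_subset[of _ "{0..<int (p * M)}"]) auto
  ultimately show "card B \<le> 1" by (simp add: card_le_Suc0_iff_eq)
  have "coprime x (int (p * M)) \<longleftrightarrow> \<not> int p dvd x" if "x \<in> P" for x
  proof -
    have "coprime x (int M)"
      using that r M coprime_mod_left_iff[of "int M" x] unfolding P_def reduced_residues_def by simp
    then have "coprime x (int (p * M)) \<longleftrightarrow> coprime x (int p)" by simp
    also have "\<dots> \<longleftrightarrow> \<not> int p dvd x"
      using p by (metis residues_prime.p_coprime_right_int residues_prime.intro)
    finally show ?thesis .
  qed
  then show "{x \<in> reduced_residues (int (p * M)). x mod int M = r} = {x. 0 \<le> x \<and> x < int (p * M) \<and> x mod int M = r} - B"
    unfolding B_def P_def reduced_residues_def by auto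
qed

lemma card_reduced_residues_fibre_ge:
  fixes p M :: nat and r :: int
  assumes p: "prime p" and M: "M > 0" and "coprime p M" and r: "r \<in> reduced_residues (int M)"
  shows "p - 1 \<le> card {x \<in> reduced_residues (int (p * M)). x mod int M = r}"
proof -
  define P where "P = {x. 0 \<le> x \<and> x < int (p * M) \<and> x mod int M = r}"
  have r_bounds: "0 \<le> r" "r < int M" using r unfolding reduced_residues_def by auto
  obtain B where B: "B \<subseteq> P" "card B \<le> 1"
    and F_eq: "{x \<in> reduced_residues (int (p * M)). x mod int M = r} = P - B"
    using reduced_residues_fibre[OF assms] unfolding P_def by blast
  have "finite P" unfolding P_def by (rule finite_subset[of _ "{0..<int (p * M)}"]) auto
  then show ?thesis
    using card_progression[OF M r_bounds, of p] B
    unfolding F_eq P_def by (simp add: card_Diff_subset finite_subset)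
qed

lemma norm_sum_ee_reduced_residues_fibre_le:
  fixes p M :: nat and m r :: int
  assumes p: "prime p" and M: "M > 0" and "coprime p M" and r: "r \<in> reduced_residues (int M)"
    and pm: "\<not> int p dvd m"
  shows "cmod (\<Sum>x | x \<in> reduced_residues (int (p * M)) \<and> x mod int M = r.
      ee (of_int m * of_int x / real (p * M))) \<le> 1"
proof -
  define P where "P = {x. 0 \<le> x \<and> x < int (p * M) \<and> x mod int M = r}"
  define F where "F = {x \<in> reduced_residues (int (p * M)). x mod int M = r}"
  have r_bounds: "0 \<le> r" "r < int M" using r unfolding reduced_residues_def by auto
  obtain B where B: "B \<subseteq> P" "card B \<le> 1" and F_eq: "F = P - B"
    using reduced_residues_fibre[OF assms(1-4)] unfolding F_def P_def by blast
  have finP: "finite P" unfolding P_def by (rule finite_subset[of _ "{0..<int (p * M)}"]) auto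
  have "(\<Sum>x\<in>F. ee (of_int m * of_int x / real (p * M)))
      = (\<Sum>x\<in>P. ee (of_int m * of_int x / real (p * M))) - (\<Sum>x\<in>B. ee (of_int m * of_int x / real (p * M)))"
    unfolding F_eq using sum_diff[OF finP B(1)] by simp
  also have "(\<Sum>x\<in>P. ee (of_int m * of_int x / real (p * M))) = 0"
    unfolding P_def using sum_ee_progression[OF prime_gt_0_nat[OF p] M pm r_bounds] by simp
  finally have "cmod (\<Sum>x\<in>F. ee (of_int m * of_int x / real (p * M)))
      = cmod (\<Sum>x\<in>B. ee (of_int m * of_int x / real (p * M)))"
    by simp
  also have "\<dots> \<le> (\<Sum>x\<in>B. cmod (ee (of_int m * of_int x / real (p * M))))"
    by (rule norm_sum)
  also have "\<dots> \<le> 1" using B(2) by simp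
  finally show ?thesis unfolding F_def .
qed

lemma card_reduced_residues_mult_prime_ge:
  fixes p M :: nat
  assumes p: "prime p" and M: "M > 0" and cop: "coprime p M"
  shows "card (reduced_residues (int M)) * (p - 1) \<le> card (reduced_residues (int (p * M)))"
proof -
  define U where "U = reduced_residues (int M)"
  define F where "F r = {x \<in> reduced_residues (int (p * M)). x mod int M = r}" for r
  have "card U * (p - 1) \<le> (\<Sum>r\<in>U. card (F r))"
    using sum_bounded_below[of U "p - 1" "\<lambda>r. card (F r)"] card_reduced_residues_fibre_ge[OF p M cop]
    unfolding U_def F_def by (simp add: mult.commute)
  also have "\<dots> = (\<Sum>r\<in>U. \<Sum>x\<in>F r. 1)" by simp
  also have "\<dots> = card (reduced_residues (int (p * M)))"
  proof -
    have "(\<lambda>x. x mod int M) ` reduced_residues (int (p * M)) \<subseteq> U"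
      using M coprime_mod_left_iff[of "int M"] unfolding U_def reduced_residues_def by auto
    then have "(\<Sum>r\<in>U. \<Sum>x\<in>F r. 1) = (\<Sum>x\<in>reduced_residues (int (p * M)). 1::nat)"
      unfolding F_def by (intro sum.group) (simp_all add: U_def)
    then show ?thesis by simp
  qed
  finally show ?thesis unfolding U_def .
qed

text \<open>Since \<open>x \<equiv> r (mod M)\<close> forces \<open>x\<inverse> \<equiv> r\<inverse> (mod M)\<close>, the sum \<open>K(m, p k, p M)\<close> only sees the
  fibres of the reduction map from units modulo \<open>p M\<close> to units modulo \<open>M\<close>.\<close>
lemma kloosterman_multiple_eq_sum_fibres:
  fixes p M k :: nat and m :: int
  assumes pM: "p * M \<ge> 2"
  shows "kloosterman m (int (p * k)) (int (p * M))
    = (\<Sum>r\<in>reduced_residues (int M).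
         (\<Sum>x | x \<in> reduced_residues (int (p * M)) \<and> x mod int M = r. ee (of_int m * of_int x / real (p * M)))
         * ee (real k * of_int (modinv r (int M)) / real M))"
proof -
  define c where "c = int (p * M)"
  have M: "M > 0" and p: "p > 0" using pM by (auto intro: gr0I)
  have reduce: "x mod int M \<in> reduced_residues (int M)" if "x \<in> reduced_residues c" for x
    using that M coprime_mod_left_iff[of "int M" x] unfolding reduced_residues_def c_def by auto
  have inverse: "ee (real k * of_int (modinv x c) / real M) = ee (real k * of_int (modinv (x mod int M) (int M)) / real M)"
    if "x \<in> reduced_residues c" for x
  proof (rule ee_cong[OF _ M])
    have "[x * modinv x c = 1] (mod int M)"
      using that M unfolding reduced_residues_def c_def by (auto intro: mult_modinv_cong_1)
    moreover have "[x mod int M * modinv (x mod int M) (int M) = 1] (mod int M)"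
      using reduce[OF that] unfolding reduced_residues_def by (auto intro: mult_modinv_cong_1)
    moreover have "[x = x mod int M] (mod int M)" by (simp add: cong_def)
    ultimately show "[modinv x c = modinv (x mod int M) (int M)] (mod int M)"
      using cong_inverses_iff by blast
  qed
  have "kloosterman m (int (p * k)) c = (\<Sum>x\<in>reduced_residues c.
      ee (of_int m * of_int x / of_int c) * ee (of_int (int (p * k)) * of_int (modinv x c) / of_int c))"
    using pM unfolding c_def by (intro kloosterman_eq_sum_reduced_residues) linarith
  also have "\<dots> = (\<Sum>x\<in>reduced_residues c. ee (of_int m * of_int x / real (p * M))
      * ee (real k * of_int (modinv (x mod int M) (int M)) / real M))"
  proof (intro sum.cong refl)
    fix x assume x: "x \<in> reduced_residues c"
    have "of_int (int (p * k)) * of_int (modinv x c) / of_int c = real k * of_int (modinv x c) / real M"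
      using p M unfolding c_def by (simp add: field_simps)
    then show "ee (of_int m * of_int x / of_int c) * ee (of_int (int (p * k)) * of_int (modinv x c) / of_int c)
      = ee (of_int m * of_int x / real (p * M)) * ee (real k * of_int (modinv (x mod int M) (int M)) / real M)"
      using inverse[OF x] unfolding c_def by simp
  qed
  also have "\<dots> = (\<Sum>r\<in>reduced_residues (int M). \<Sum>x | x \<in> reduced_residues c \<and> x mod int M = r.
      ee (of_int m * of_int x / real (p * M)) * ee (real k * of_int (modinv (x mod int M) (int M)) / real M))"
    by (rule sum.group[symmetric]) (auto simp: reduce)
  also have "\<dots> = (\<Sum>r\<in>reduced_residues (int M). \<Sum>x | x \<in> reduced_residues c \<and> x mod int M = r.
      ee (of_int m * of_int x / real (p * M)) * ee (real k * of_int (modinv r (int M)) / real M))"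
    by (intro sum.cong refl) auto
  finally show ?thesis unfolding c_def by (simp add: sum_distrib_right)
qed

lemma sum_norm_kloosterman_sq_multiples:
  fixes p M :: nat and m :: int
  assumes p: "prime p" and M: "M > 0" and cop: "coprime p M" and pm: "\<not> int p dvd m"
  shows "(\<Sum>k<M. (cmod (kloosterman m (int (p * k)) (int (p * M))))^2) * (real p - 1)
    \<le> real M * card (reduced_residues (int (p * M)))"
proof -
  define U where "U = reduced_residues (int M)"
  define F where "F r = {x \<in> reduced_residues (int (p * M)). x mod int M = r}" for r
  define G where "G r = (\<Sum>x\<in>F r. ee (of_int m * of_int x / real (p * M)))" for r
  have p1: "real p > 1" using prime_gt_1_nat[OF p] by simp
  have "p \<le> p * M" using M by simp
  then have pM: "p * M \<ge> 2" using prime_ge_2_nat[OF p] by linarith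
  have "(\<Sum>k<M. (cmod (kloosterman m (int (p * k)) (int (p * M))))^2)
      = (\<Sum>k<M. (cmod (\<Sum>r\<in>U. G r * ee (real k * of_int (modinv r (int M)) / real M)))^2)"
    by (simp only: kloosterman_multiple_eq_sum_fibres[OF pM] U_def G_def F_def)
  also have "\<dots> = real M * (\<Sum>r\<in>U. (cmod (G r))^2)"
  proof (rule discrete_parseval[OF M])
    fix i j assume "i \<in> U" "j \<in> U" "[modinv i (int M) = modinv j (int M)] (mod int M)"
    then show "i = j" unfolding U_def by (rule modinv_cong_imp_eq)
  qed (simp add: U_def)
  also have "\<dots> \<le> real M * card U"
  proof -
    have "(cmod (G r))^2 \<le> 1" if "r \<in> U" for r
      using norm_sum_ee_reduced_residues_fibre_le[OF p M cop that[unfolded U_def] pm]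
      unfolding G_def F_def by (simp add: power_le_one)
    then have "(\<Sum>r\<in>U. (cmod (G r))^2) \<le> card U"
      using sum_bounded_above[of U "\<lambda>r. (cmod (G r))^2" 1] by simp
    then show ?thesis using M by simp
  qed
  finally have moment: "(\<Sum>k<M. (cmod (kloosterman m (int (p * k)) (int (p * M))))^2) \<le> real M * card U" .
  have "real (card U * (p - 1)) \<le> real (card (reduced_residues (int (p * M))))"
    unfolding U_def of_nat_le_iff by (rule card_reduced_residues_mult_prime_ge[OF p M cop])
  then have "real M * (real (card U) * (real p - 1)) \<le> real M * card (reduced_residues (int (p * M)))"
    using p1 by (simp add: of_nat_diff mult_left_mono)
  moreover have "(\<Sum>k<M. (cmod (kloosterman m (int (p * k)) (int (p * M))))^2) * (real p - 1)
      \<le> real M * card U * (real p - 1)"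
    using moment p1 by (intro mult_right_mono) auto
  ultimately show ?thesis by (simp add: mult.assoc)
qed

text \<open>The worst case is \<open>P = {2, \<dots>, k + 1}\<close>, where the sum telescopes to \<open>1 - 1 / (k + 1)\<close>.\<close>
lemma sum_inverse_mult_pred_le:
  fixes P :: "nat set"
  assumes "finite P" "\<And>p. p \<in> P \<Longrightarrow> p \<ge> 2" "card P = k"
  shows "(\<Sum>p\<in>P. 1 / (real p * (real p - 1))) \<le> 1 - 1 / (real k + 1)"
  using assms
proof (induction k arbitrary: P)
  case 0
  then show ?case by simp
next
  case (Suc k)
  define q where "q = Max P"
  have "P \<noteq> {}" using Suc.prems(3) by auto
  then have qP: "q \<in> P" unfolding q_def using Suc.prems(1) by simp
  have "P \<subseteq> {2..q}" using Suc.prems(1,2) unfolding q_def by auto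
  then have "Suc k \<le> card {2..q}" using card_mono[of "{2..q}" P] Suc.prems(3) by simp
  then have q: "real q \<ge> real k + 2" by simp
  have "(\<Sum>p\<in>P. 1 / (real p * (real p - 1)))
      = 1 / (real q * (real q - 1)) + (\<Sum>p\<in>P - {q}. 1 / (real p * (real p - 1)))"
    using Suc.prems(1) qP by (simp add: sum.remove)
  also have "\<dots> \<le> 1 / ((real k + 2) * (real k + 1)) + (1 - 1 / (real k + 1))"
  proof (rule add_mono)
    show "1 / (real q * (real q - 1)) \<le> 1 / ((real k + 2) * (real k + 1))"
      using q by (intro divide_left_mono mult_mono) auto
    show "(\<Sum>p\<in>P - {q}. 1 / (real p * (real p - 1))) \<le> 1 - 1 / (real k + 1)"
      using Suc.IH[of "P - {q}"] Suc.prems qP by auto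
  qed
  also have "\<dots> = 1 - 1 / (real (Suc k) + 1)"
  proof -
    have "1 / ((real k + 2) * (real k + 1)) = 1 / (real k + 1) - 1 / (real k + 2)"
      by (simp add: field_simps)
    then show ?thesis by simp
  qed
  finally show ?case .
qed

lemma sum_multiples_below:
  fixes f :: "nat \<Rightarrow> 'a::comm_monoid_add" and p N :: nat
  assumes "p > 0" "p dvd N"
  shows "(\<Sum>k | k < N \<and> p dvd k. f k) = (\<Sum>j<N div p. f (p * j))"
proof -
  have "{k. k < N \<and> p dvd k} = (\<lambda>j. p * j) ` {..<N div p}"
  proof (intro equalityI subsetI)
    fix k assume "k \<in> {k. k < N \<and> p dvd k}"
    then obtain j where "k = p * j" "p * j < p * (N div p)" using assms by auto
    then show "k \<in> (\<lambda>j. p * j) ` {..<N div p}" by auto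
  next
    fix k assume "k \<in> (\<lambda>j. p * j) ` {..<N div p}"
    then obtain j where "k = p * j" "j < N div p" by auto
    then show "k \<in> {k. k < N \<and> p dvd k}"
      using assms mult_less_mono2[of j "N div p" p] by auto
  qed
  moreover have "inj_on (\<lambda>j. p * j) {..<N div p}" using assms(1) by (auto simp: inj_on_def)
  ultimately show ?thesis by (simp add: sum.reindex)
qed

lemma sum_not_coprime_le_sum_multiples:
  fixes f :: "nat \<Rightarrow> real" and N :: nat
  assumes nonneg: "\<And>k. f k \<ge> 0"
  shows "(\<Sum>k | k < N \<and> \<not> coprime k N. f k) \<le> (\<Sum>p\<in>prime_factors N. \<Sum>j<N div p. f (p * j))"
proof -
  have "(\<Sum>k | k < N \<and> \<not> coprime k N. f k)
      \<le> (\<Sum>k | k < N \<and> \<not> coprime k N. \<Sum>p\<in>prime_factors N. if p dvd k then f k else 0)"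
  proof (rule sum_mono)
    fix k assume k: "k \<in> {k. k < N \<and> \<not> coprime k N}"
    then have "gcd k N \<noteq> 1" by (metis mem_Collect_eq coprime_iff_gcd_eq_1)
    then obtain p where p: "prime p" "p dvd k" "p dvd N"
      using prime_factor_nat[of "gcd k N"] by auto
    have "N \<noteq> 0" using k by auto
    with p have "p \<in> prime_factors N" by (simp add: in_prime_factors_iff)
    then show "f k \<le> (\<Sum>p\<in>prime_factors N. if p dvd k then f k else 0)"
      using member_le_sum[of p "prime_factors N" "\<lambda>p. if p dvd k then f k else 0"] p(2) nonneg
      by simp
  qed
  also have "\<dots> = (\<Sum>p\<in>prime_factors N. \<Sum>k | k < N \<and> \<not> coprime k N. if p dvd k then f k else 0)"
    by (rule sum.swap)
  also have "\<dots> \<le> (\<Sum>p\<in>prime_factors N. \<Sum>k<N. if p dvd k then f k else 0)"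
    by (intro sum_mono sum_mono2) (auto simp: nonneg)
  also have "\<dots> = (\<Sum>p\<in>prime_factors N. \<Sum>j<N div p. f (p * j))"
  proof (rule sum.cong[OF refl])
    fix p assume "p \<in> prime_factors N"
    then have "p > 0" "p dvd N" by (auto simp: in_prime_factors_iff prime_gt_0_nat)
    have "(\<Sum>k<N. if p dvd k then f k else 0) = (\<Sum>k | k < N \<and> p dvd k. f k)"
      using sum.inter_filter[of "{..<N}" f "\<lambda>k. p dvd k"] by simp
    also have "\<dots> = (\<Sum>j<N div p. f (p * j))"
      by (rule sum_multiples_below) fact+
    finally show "(\<Sum>k<N. if p dvd k then f k else 0) = (\<Sum>j<N div p. f (p * j))" .
  qed
  finally show ?thesis .
qed

lemma sum_norm_kloosterman_sq_prime_multiples: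
  fixes N m p :: nat
  assumes sf: "squarefree N" and cop: "coprime m N" and "p \<in> prime_factors N"
  shows "(\<Sum>j<N div p. (cmod (kloosterman (int m) (int (p * j)) (int N)))^2)
    \<le> real N * card (reduced_residues (int N)) * (1 / (real p * (real p - 1)))"
proof -
  define M where "M = N div p"
  define u where "u = real (card (reduced_residues (int N)))"
  from assms(3) have p: "prime p" "p dvd N" "N \<noteq> 0" by (auto simp: in_prime_factors_iff)
  then have N_eq: "N = p * M" unfolding M_def by simp
  with p(3) have M: "M > 0" by (simp add: gr0I)
  have "\<not> p dvd M"
  proof
    assume "p dvd M"
    then have "p^2 dvd N" unfolding N_eq by (simp add: power2_eq_square)
    then have "is_unit p" by (rule squarefreeD[OF sf])
    then show False using p(1) by simp
  qed
  then have "coprime p M" using p(1) by (simp add: prime_imp_coprime_nat)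
  moreover have "\<not> int p dvd int m"
  proof
    assume "int p dvd int m"
    then have "is_unit p" using coprime_common_divisor[OF cop _ p(2)] by simp
    then show False using p(1) by simp
  qed
  ultimately have "(\<Sum>j<M. (cmod (kloosterman (int m) (int (p * j)) (int N)))^2) * (real p - 1) \<le> real M * u"
    using sum_norm_kloosterman_sq_multiples[OF p(1) M] unfolding u_def N_eq by simp
  moreover have "real p > 1" using prime_gt_1_nat[OF p(1)] by simp
  ultimately have "(\<Sum>j<M. (cmod (kloosterman (int m) (int (p * j)) (int N)))^2) \<le> real M * u / (real p - 1)"
    by (simp add: pos_le_divide_eq)
  also have "\<dots> = real N * u * (1 / (real p * (real p - 1)))"
    using \<open>real p > 1\<close> unfolding N_eq by (simp add: field_simps)
  finally show ?thesis unfolding M_def u_def .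
qed

lemma sum_norm_kloosterman_sq_not_coprime:
  fixes N m :: nat
  assumes "squarefree N" and "coprime m N"
  shows "(\<Sum>k | k < N \<and> \<not> coprime k N. (cmod (kloosterman (int m) (int k) (int N)))^2)
    \<le> real N * card (reduced_residues (int N)) * (1 - 1 / (real (omega N) + 1))"
proof -
  define f where "f k = (cmod (kloosterman (int m) (int k) (int N)))^2" for k
  define u where "u = real (card (reduced_residues (int N)))"
  have "(\<Sum>k | k < N \<and> \<not> coprime k N. f k) \<le> (\<Sum>p\<in>prime_factors N. \<Sum>j<N div p. f (p * j))"
    by (rule sum_not_coprime_le_sum_multiples) (simp add: f_def)
  also have "\<dots> \<le> (\<Sum>p\<in>prime_factors N. real N * u * (1 / (real p * (real p - 1))))"
    unfolding f_def u_def by (intro sum_mono sum_norm_kloosterman_sq_prime_multiples assms)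
  also have "\<dots> = real N * u * (\<Sum>p\<in>prime_factors N. 1 / (real p * (real p - 1)))"
    by (simp add: sum_distrib_left)
  also have "\<dots> \<le> real N * u * (1 - 1 / (real (omega N) + 1))"
    by (intro mult_left_mono sum_inverse_mult_pred_le)
      (auto simp: omega_def u_def in_prime_factors_iff prime_ge_2_nat)
  finally show ?thesis unfolding f_def u_def .
qed

lemma card_coprime_below_eq_card_reduced_residues:
  "card {k. k < N \<and> coprime k N} = card (reduced_residues (int N))"
proof -
  have "reduced_residues (int N) = int ` {k. k < N \<and> coprime k N}"
  proof (intro equalityI subsetI)
    fix x assume x: "x \<in> reduced_residues (int N)"
    then have "nat x < N" "coprime (nat x) N" "x = int (nat x)"
      unfolding reduced_residues_def by (auto simp flip: coprime_int_iff)
    then show "x \<in> int ` {k. k < N \<and> coprime k N}" by blast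
  qed (auto simp: reduced_residues_def)
  then show ?thesis by (simp add: card_image)
qed

lemma exists_large_kloosterman:
  fixes N m :: nat
  assumes N: "N \<ge> 2" and sf: "squarefree N" and cop: "coprime m N"
  obtains n where "n < N" "coprime n N"
    "real N / (real (omega N) + 1) \<le> (cmod (kloosterman (int m) (int n) (int N)))^2"
proof -
  define f where "f k = (cmod (kloosterman (int m) (int k) (int N)))^2" for k
  define A where "A = {k. k < N \<and> coprime k N}"
  define u where "u = real (card A)"
  have "{..<N} = A \<union> {k. k < N \<and> \<not> coprime k N}" "A \<inter> {k. k < N \<and> \<not> coprime k N} = {}"
    unfolding A_def by auto
  then have "(\<Sum>k<N. f k) = (\<Sum>k\<in>A. f k) + (\<Sum>k | k < N \<and> \<not> coprime k N. f k)"
    by (simp add: A_def sum.union_disjoint)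
  moreover have "(\<Sum>k<N. f k) = real N * u"
    using sum_norm_kloosterman_sq[OF N] card_coprime_below_eq_card_reduced_residues
    unfolding f_def u_def A_def by simp
  moreover have "(\<Sum>k | k < N \<and> \<not> coprime k N. f k) \<le> real N * u * (1 - 1 / (real (omega N) + 1))"
    using sum_norm_kloosterman_sq_not_coprime[OF sf cop] card_coprime_below_eq_card_reduced_residues
    unfolding f_def u_def A_def by simp
  ultimately have "of_nat (card A) * (real N / (real (omega N) + 1)) \<le> (\<Sum>k\<in>A. f k)"
    unfolding u_def by (simp add: field_simps)
  moreover have "card A > 0"
    using N unfolding A_def by (subst card_gt_0_iff) (auto intro!: exI[of _ 1])
  ultimately obtain n where "n \<in> A" "real N / (real (omega N) + 1) \<le> f n"
    using sum_bounded_above_strict[of A f "real N / (real (omega N) + 1)"] by (meson not_le)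
  then show ?thesis using that unfolding A_def f_def by blast
qed

lemma sqrt_div_two_powr_le:
  fixes x :: real and k :: nat
  assumes "x \<ge> 0"
  shows "sqrt x / 2 powr (real k / 2 + 1) \<le> sqrt (x / (real k + 1))"
proof -
  have "2 powr (real k / 2 + 1) = 2 powr (real (k + 2) / 2)"
    by (simp add: add_divide_distrib add.commute)
  also have "\<dots> = sqrt (2 powr real (k + 2))" by (rule powr_half_sqrt_powr) simp
  also have "\<dots> = sqrt (2 ^ (k + 2))" by (subst powr_realpow) auto
  finally have "2 powr (real k / 2 + 1) = sqrt (2 ^ (k + 2))" .
  moreover have "real k + 1 \<le> 2 ^ (k + 2)"
  proof -
    have "k + 1 \<le> (2::nat) ^ (k + 2)"
      using less_exp[of "k + 1"] power_increasing[of "k + 1" "k + 2" "2::nat"] by simp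
    then have "real (k + 1) \<le> real (2 ^ (k + 2))" by (simp only: of_nat_le_iff)
    then show ?thesis by simp
  qed
  ultimately show ?thesis
    using assms by (simp add: real_sqrt_divide[symmetric] divide_left_mono)
qed

theorem lemma3:
  fixes m N :: nat
  assumes "N \<ge> 1" and "squarefree N" and "coprime m N"
  shows "\<exists>n::nat. 1 \<le> n \<and> n \<le> 2 * N \<and> n \<noteq> m \<and> coprime n N \<and>
           cmod (kloosterman (int m) (int n) (int N))
             \<ge> sqrt (real N) / 2 powr (real (omega N) / 2 + 1)"
proof (cases "N = 1")
  case True
  then have "sqrt (real N) / 2 powr (real (omega N) / 2 + 1) \<le> 1" by (simp add: omega_def)
  with True show ?thesis
    by (intro exI[of _ "if m = 1 then 2 else 1"]) (auto simp: kloosterman_modulus_1)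
next
  case False
  then have N: "N \<ge> 2" using assms(1) by simp
  obtain n where n: "n < N" "coprime n N"
    and large: "real N / (real (omega N) + 1) \<le> (cmod (kloosterman (int m) (int n) (int N)))^2"
    using exists_large_kloosterman[OF N assms(2,3)] .
  have "n \<noteq> 0"
  proof
    assume "n = 0"
    with n(2) have "N = 1" by simp
    with N show False by simp
  qed
  have "sqrt (real N) / 2 powr (real (omega N) / 2 + 1) \<le> sqrt (real N / (real (omega N) + 1))"
    by (rule sqrt_div_two_powr_le) simp
  also have "\<dots> \<le> sqrt ((cmod (kloosterman (int m) (int n) (int N)))^2)"
    using large by (rule real_sqrt_le_mono)
  finally have bound: "sqrt (real N) / 2 powr (real (omega N) / 2 + 1) \<le> cmod (kloosterman (int m) (int n) (int N))"
    by simp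
  show ?thesis
  proof (cases "n = m")
    case False
    with n \<open>n \<noteq> 0\<close> bound show ?thesis by (intro exI[of _ n]) simp
  next
    case True
    have "kloosterman (int m) (int (n + N)) (int N) = kloosterman (int m) (int n) (int N)"
      using kloosterman_add_modulus[of "int N" "int m" "int n"] N by simp
    moreover have "coprime (n + N) N" using n(2) by (simp only: coprime_iff_gcd_eq_1 gcd_add1)
    ultimately show ?thesis using n N True bound by (intro exI[of _ "n + N"]) simp
  qed
qed
end
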